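(* Let $D_1,D_2\subseteq\mathbb{N}$. If $D_1\cup D_2$ is accessible, then $D_1$ is accessible or $D_2$ is accessible.
   Context: For $D\subseteq\mathbb{N}$, a $k$-term $D$-diffsequence is a sequence of integers $x_1,\dots,x_k$ with $x_{i+1}-x_i\in D$ for all $i$. $D$ is accessible if for every $r\in\mathbb{N}$, every $r$-coloring of $\mathbb{N}$ and every $k\ge1$ there is a monochromatic $k$-term $D$-diffsequence in $\mathbb{N}$. *)

theory Defs
  imports Main
begin

text \<open>Natural numbers N are the positive integers {1,2,...}; subsets of N are
  modelled as sets of type nat set not containing 0.\<close>

definition posnat_set :: "nat set \<Rightarrow> bool" where
  "posnat_set D \<longleftrightarrow> D \<subseteq> {1..}"

definition diffseq :: "nat set \<Rightarrow> nat \<Rightarrow> (nat \<Rightarrow> nat) \<Rightarrow> bool" where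
  "diffseq D k x \<longleftrightarrow> (\<forall>i<k. 1 \<le> x i) \<and>
     (\<forall>i. Suc i < k \<longrightarrow> (\<exists>d\<in>D. x (Suc i) = x i + d))"

definition accessible :: "nat set \<Rightarrow> bool" where
  "accessible D \<longleftrightarrow>
     (\<forall>r::nat. \<forall>c::nat \<Rightarrow> nat. (\<forall>n\<ge>1. c n < r) \<longrightarrow>
        (\<forall>k\<ge>1. \<exists>x. diffseq D k x \<and> (\<forall>i<k. \<forall>j<k. c (x i) = c (x j))))"

end

theory Submission
  imports Defs
begin

text \<open>If neither D1 nor D2 is accessible, pick colourings witnessing this, with no monochromatic
  k1-term D1-diffsequence and no monochromatic k2-term D2-diffsequence. Colour n additionally by
  the length of the longest monochromatic D1- and D2-diffsequence ending at n; these lengths are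
  bounded and strictly increase along every monochromatic step. In the product colouring,
  which uses finitely many colours, no step with difference in D1 \<union> D2 is monochromatic, so
  D1 \<union> D2 is not accessible, already for 2-term diffsequences.\<close>

definition colouring :: "nat \<Rightarrow> (nat \<Rightarrow> nat) \<Rightarrow> bool" where
  "colouring r c \<longleftrightarrow> (\<forall>n\<ge>1. c n < r)"

lemma diffseq_prefix:
  assumes "diffseq D m x" and "k \<le> m"
  shows "diffseq D k x"
  using assms unfolding diffseq_def by auto

lemma diffseq_snoc:
  assumes x: "diffseq D m x" and "m \<ge> 1" and "d \<in> D"
  shows "diffseq D (Suc m) (x(m := x (m - 1) + d))"
proof -
  have "m - 1 < m" using \<open>m \<ge> 1\<close> by simp
  then have "1 \<le> x (m - 1) + d" using x unfolding diffseq_def by (simp add: trans_le_add1)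
  with assms show ?thesis
    unfolding diffseq_def by (auto simp: less_Suc_eq)
qed

lemma accessible_obtains_monochromatic_step:
  assumes "accessible D" and "colouring r c"
  obtains n d where "n \<ge> 1" and "d \<in> D" and "c (n + d) = c n"
proof -
  from assms obtain x where x: "diffseq D 2 x" and mono: "\<forall>i<2. \<forall>j<2. c (x i) = c (x j)"
    unfolding accessible_def colouring_def by (metis one_le_numeral)
  from x obtain d where "d \<in> D" "x 1 = x 0 + d" "x 0 \<ge> 1"
    unfolding diffseq_def by fastforce
  moreover have "c (x 1) = c (x 0)" using mono by simp
  ultimately show thesis using that by simp
qed

definition mono_run :: "nat set \<Rightarrow> (nat \<Rightarrow> nat) \<Rightarrow> nat \<Rightarrow> nat \<Rightarrow> bool" where
  "mono_run D c n m \<longleftrightarrow>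
     m \<ge> 1 \<and> (\<exists>x. diffseq D m x \<and> x (m - 1) = n \<and> (\<forall>i<m. c (x i) = c n))"

lemma mono_run_one: "n \<ge> 1 \<Longrightarrow> mono_run D c n 1"
  unfolding mono_run_def diffseq_def by (intro conjI exI[of _ "\<lambda>_. n"]) auto

lemma mono_run_snoc:
  assumes "mono_run D c n m" and "d \<in> D" and "c (n + d) = c n"
  shows "mono_run D c (n + d) (Suc m)"
proof -
  from assms(1) obtain x where "m \<ge> 1" and x: "diffseq D m x" "x (m - 1) = n"
      and mono: "\<forall>i<m. c (x i) = c n"
    unfolding mono_run_def by blast
  let ?y = "x(m := n + d)"
  have "diffseq D (Suc m) ?y" using diffseq_snoc[OF x(1) \<open>m \<ge> 1\<close> assms(2)] x(2) by simp
  moreover have "\<forall>i<Suc m. c (?y i) = c (n + d)" using mono assms(3) by (auto simp: less_Suc_eq)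
  ultimately show ?thesis unfolding mono_run_def by (intro conjI exI[of _ ?y]) auto
qed

lemma mono_run_short:
  assumes "mono_run D c n m"
    and no_mono: "\<And>x. diffseq D k x \<Longrightarrow> \<not> (\<forall>i<k. \<forall>j<k. c (x i) = c (x j))"
  shows "m < k"
proof (rule ccontr)
  assume "\<not> m < k"
  from assms(1) obtain x where "diffseq D m x" and "\<forall>i<m. c (x i) = c n"
    unfolding mono_run_def by blast
  with \<open>\<not> m < k\<close> have "diffseq D k x" and "\<forall>i<k. \<forall>j<k. c (x i) = c (x j)"
    using diffseq_prefix by auto
  with no_mono show False by blast
qed

lemma not_accessible_graded_colouring:
  assumes "\<not> accessible D"
  obtains r c K a where "colouring r c" and "colouring K a"
    and "\<And>n d. n \<ge> 1 \<Longrightarrow> d \<in> D \<Longrightarrow> c (n + d) = c n \<Longrightarrow> a n < a (n + d)"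
proof -
  from assms obtain r k c where c: "colouring r c"
    and no_mono: "\<And>x. diffseq D k x \<Longrightarrow> \<not> (\<forall>i<k. \<forall>j<k. c (x i) = c (x j))"
    unfolding accessible_def colouring_def by blast
  define a where "a n = (GREATEST m. mono_run D c n m)" for n
  have bounded: "m \<le> k" if "mono_run D c n m" for n m
    using mono_run_short[OF that no_mono] by simp
  have run_a: "mono_run D c n (a n)" if "n \<ge> 1" for n
    unfolding a_def using GreatestI_nat mono_run_one[OF that] bounded by metis
  have a_max: "m \<le> a n" if "mono_run D c n m" for n m
    unfolding a_def using Greatest_le_nat that bounded by metis
  have "colouring k a"
    unfolding colouring_def using mono_run_short[OF run_a no_mono] by blast
  moreover have "a n < a (n + d)" if "n \<ge> 1" "d \<in> D" "c (n + d) = c n" for n d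
    using a_max[OF mono_run_snoc[OF run_a that(2,3)]] that(1) by simp
  ultimately show thesis using that c by blast
qed

lemma colouring_by_finite_labels:
  assumes "finite S" and "\<And>n. n \<ge> 1 \<Longrightarrow> f n \<in> S"
  obtains c where "colouring (card S) c"
    and "\<And>n m. n \<ge> 1 \<Longrightarrow> m \<ge> 1 \<Longrightarrow> c n = c m \<Longrightarrow> f n = f m"
proof -
  from \<open>finite S\<close> obtain g where g: "bij_betw g S {0..<card S}"
    using ex_bij_betw_finite_nat by blast
  have "colouring (card S) (g \<circ> f)"
    unfolding colouring_def using bij_betw_apply[OF g] assms(2) by auto
  moreover have "f n = f m" if "n \<ge> 1" "m \<ge> 1" "(g \<circ> f) n = (g \<circ> f) m" for n m
    using that assms(2) bij_betw_imp_inj_on[OF g] by (auto dest: inj_onD)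
  ultimately show thesis using that by blast
qed

theorem mainTheorem12:
  fixes D1 D2 :: "nat set"
  assumes "posnat_set D1" and "posnat_set D2"
    and "accessible (D1 \<union> D2)"
  shows "accessible D1 \<or> accessible D2"
proof (rule ccontr)
  assume "\<not> (accessible D1 \<or> accessible D2)"
  then obtain r1 c1 K1 a1 r2 c2 K2 a2
    where "colouring r1 c1" "colouring K1 a1" "colouring r2 c2" "colouring K2 a2"
      and grow1: "\<And>n d. n \<ge> 1 \<Longrightarrow> d \<in> D1 \<Longrightarrow> c1 (n + d) = c1 n \<Longrightarrow> a1 n < a1 (n + d)"
      and grow2: "\<And>n d. n \<ge> 1 \<Longrightarrow> d \<in> D2 \<Longrightarrow> c2 (n + d) = c2 n \<Longrightarrow> a2 n < a2 (n + d)"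
    using not_accessible_graded_colouring by metis
  then have "\<And>n. n \<ge> 1 \<Longrightarrow> (c1 n, a1 n, c2 n, a2 n) \<in> {..<r1} \<times> {..<K1} \<times> {..<r2} \<times> {..<K2}"
    unfolding colouring_def by auto
  then obtain c where c: "colouring (card ({..<r1} \<times> {..<K1} \<times> {..<r2} \<times> {..<K2})) c"
    and labels: "\<And>n m. n \<ge> 1 \<Longrightarrow> m \<ge> 1 \<Longrightarrow> c n = c m \<Longrightarrow>
                   (c1 n, a1 n, c2 n, a2 n) = (c1 m, a1 m, c2 m, a2 m)"
    by (rule colouring_by_finite_labels[rotated]) auto
  obtain n d where "n \<ge> 1" "d \<in> D1 \<union> D2" "c (n + d) = c n"
    using accessible_obtains_monochromatic_step[OF assms(3) c] .
  with labels[of "n + d" n] grow1[of n d] grow2[of n d] show False by auto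
qed

end
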